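(* Let $r$ be a prime power, $q=r^2$, and let $M$ be a positive integer with $M\mid (r+1)$. Then there exists a matrix $A\in M_{M,M}(\mathbb{F}_q)$ such that $AA^\dagger$ is diagonal (indeed $AA^\dagger=MI_M$ with $M\neq 0$ in $\mathbb{F}_q$) and $\delta_i(A)=M-i+1$ for all $1\le i\le M$.
   Context: For $a\in\mathbb{F}_q$, $\overline{a}:=a^r$; for a matrix $A=[a_{ij}]$, $A^\dagger:=[\overline{a_{ji}}]$. For $A\in M_{s,l}(\mathbb{F}_q)$ and $1\le i\le s$, $\delta_i(A)$ denotes the minimum Hamming weight of the linear code of length $l$ over $\mathbb{F}_q$ generated by the first $i$ rows of $A$. *)

theory Defs
  imports "HOL-Computational_Algebra.Primes"
begin

text \<open>Matrices over a field are represented as functions nat => nat => 'a,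
  only the entries with indices below the stated dimensions being relevant.
  Vectors of length l are functions nat => 'a that vanish at indices >= l.\<close>

definition prime_power :: "nat \<Rightarrow> bool" where
  "prime_power r \<longleftrightarrow> (\<exists>p k. prime p \<and> k > 0 \<and> r = p ^ k)"

definition conjg :: "nat \<Rightarrow> 'a::field \<Rightarrow> 'a" where
  "conjg r a = a ^ r"

definition dagger :: "nat \<Rightarrow> (nat \<Rightarrow> nat \<Rightarrow> 'a::field) \<Rightarrow> (nat \<Rightarrow> nat \<Rightarrow> 'a)" where
  "dagger r A = (\<lambda>i j. conjg r (A j i))"

definition mat_mult :: "nat \<Rightarrow> (nat \<Rightarrow> nat \<Rightarrow> 'a::field) \<Rightarrow> (nat \<Rightarrow> nat \<Rightarrow> 'a) \<Rightarrow> (nat \<Rightarrow> nat \<Rightarrow> 'a)" where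
  "mat_mult n A B = (\<lambda>i j. \<Sum>k<n. A i k * B k j)"

definition row_code :: "(nat \<Rightarrow> nat \<Rightarrow> 'a::field) \<Rightarrow> nat \<Rightarrow> nat \<Rightarrow> (nat \<Rightarrow> 'a) set" where
  "row_code A i l = {v. \<exists>c. v = (\<lambda>j. if j < l then (\<Sum>k<i. c k * A k j) else 0)}"

definition hweight :: "nat \<Rightarrow> (nat \<Rightarrow> 'a::zero) \<Rightarrow> nat" where
  "hweight l v = card {j. j < l \<and> v j \<noteq> 0}"

text \<open>minimum Hamming weight of the code (Inf {} = 0 on nat for the zero code)\<close>
definition delta :: "(nat \<Rightarrow> nat \<Rightarrow> 'a::field) \<Rightarrow> nat \<Rightarrow> nat \<Rightarrow> nat" where
  "delta A l i = Inf (hweight l ` (row_code A i l - {\<lambda>_. 0}))"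

end

(*
  The matrix is the Vandermonde matrix A = (w^(i*j)) of a primitive M-th root of unity w,
  which exists because M divides r + 1, hence q - 1 = (r + 1)(r - 1), and the multiplicative
  group of F_q is cyclic.  Since M divides r + 1, the conjugation a |-> a^r inverts every
  M-th root of unity, so the (i,j) entry of A A^dagger is the geometric sum of the powers of
  w^(i-j), which is M for i = j and 0 otherwise; M is nonzero in F_q because the
  characteristic divides r.  The code spanned by the first i rows consists of the values at
  the M distinct points w^j of the polynomials of degree < i (a Reed-Solomon code): a nonzero
  codeword has at most i - 1 zeros, and the product of the X - w^k for 1 <= k < i attains
  this bound.
*)

theory Submission
  imports Defs
    "HOL-Algebra.Algebraic_Closure_Type"
    "HOL-Algebra.Multiplicative_Group"
    "HOL-Number_Theory.Residues"
begin

definition primitive_root_of_unity :: "nat \<Rightarrow> 'a::monoid_mult \<Rightarrow> bool" where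
  "primitive_root_of_unity M w \<longleftrightarrow> (\<forall>k. w ^ k = 1 \<longleftrightarrow> M dvd k)"

lemma pow_ring_of_type_algebra:
  "x [^]\<^bsub>ring_of_type_algebra\<^esub> (n::nat) = (x::'a::ring_1) ^ n"
  by (induction n) (simp_all add: ring_of_type_algebra_def power_commutes)

lemma finite_field_has_primitive_root_of_unity:
  assumes "M dvd card (UNIV :: 'a set) - 1"
  shows "\<exists>w::'a::{finite,field}. primitive_root_of_unity M w"
proof -
  let ?R = "ring_of_type_algebra :: 'a ring"
  let ?G = "Multiplicative_Group.mult_of ?R"
  interpret field ?R by rule
  interpret G: group ?G by (rule field_mult_group)
  have carrier_G: "carrier ?G = UNIV - {0}"
    by (simp add: ring_of_type_algebra_def)
  have fin: "finite (carrier ?G)" by simp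
  have "finite (carrier ?R)" by (simp add: ring_of_type_algebra_def)
  from finite_field_mult_group_has_gen[OF this] obtain a where
    a: "a \<in> carrier ?G" and gen: "carrier ?G = {a [^]\<^bsub>?R\<^esub> k | k::nat. k \<in> UNIV}"
    by blast
  text \<open>\<open>a\<close> generates the cyclic group \<open>?G\<close>, so \<open>a ^ d\<close> with \<open>d = (card UNIV - 1) div M\<close> has order exactly \<open>M\<close>.\<close>
  have "G.ord a = card (carrier ?G)"
    using G.generate_pow_card[OF a] G.generate_pow_nat[OF a] G.ord_ge_1[OF fin a] gen
    by (simp add: Multiplicative_Group.nat_pow_mult_of)
  also have "\<dots> = card (UNIV :: 'a set) - 1"
    using carrier_G by (simp add: card_Diff_singleton)
  finally have ord_a: "G.ord a = M * ((card (UNIV :: 'a set) - 1) div M)"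
    using assms by simp
  define d where "d = (card (UNIV :: 'a set) - 1) div M"
  have "d \<noteq> 0" "d dvd G.ord a"
    using ord_a G.ord_ge_1[OF fin a] unfolding d_def by auto
  then have "G.ord (a [^]\<^bsub>?G\<^esub> d) = M"
    using G.ord_pow[OF a] ord_a unfolding d_def by simp
  then have "\<forall>k. (a [^]\<^bsub>?G\<^esub> d) [^]\<^bsub>?G\<^esub> k = \<one>\<^bsub>?G\<^esub> \<longleftrightarrow> M dvd k"
    using G.pow_eq_id a by (metis G.nat_pow_closed)
  then have "primitive_root_of_unity M (a ^ d)"
    unfolding primitive_root_of_unity_def Multiplicative_Group.nat_pow_mult_of pow_ring_of_type_algebra
    by (simp add: power_mult[symmetric] ring_of_type_algebra_def)
  then show ?thesis ..
qed

lemma primitive_root_of_unity_power_eq_iff: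
  fixes w :: "'a::idom"
  assumes "primitive_root_of_unity M w" and "M > 0"
  shows "w ^ i = w ^ j \<longleftrightarrow> i mod M = j mod M"
proof -
  have "w ^ M = 1"
    using assms(1) unfolding primitive_root_of_unity_def by simp
  then have "w \<noteq> 0"
    using assms(2) by (auto simp: power_0_left)
  have "w ^ i = w ^ j \<longleftrightarrow> i mod M = j mod M" if "i \<le> j" for i j
  proof -
    have "w ^ i = w ^ j \<longleftrightarrow> w ^ i * 1 = w ^ i * w ^ (j - i)"
      using that by (simp flip: power_add)
    also have "\<dots> \<longleftrightarrow> w ^ (j - i) = 1"
      using \<open>w \<noteq> 0\<close> by auto
    also have "\<dots> \<longleftrightarrow> j mod M = i mod M"
      using assms(1) that unfolding primitive_root_of_unity_def by (simp add: mod_eq_dvd_iff_nat)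
    finally show ?thesis
      by auto
  qed
  then show ?thesis
    by (metis nat_le_linear)
qed

lemma inj_on_power_primitive_root_of_unity:
  fixes w :: "'a::idom"
  assumes "primitive_root_of_unity M w" and "M > 0"
  shows "inj_on (\<lambda>j. w ^ j) {..<M}"
  using primitive_root_of_unity_power_eq_iff[OF assms] by (auto intro: inj_onI)

lemma conjg_root_of_unity:
  fixes x :: "'a::field"
  assumes "x ^ M = 1" and "M dvd r + 1"
  shows "conjg r x = inverse x"
proof -
  obtain t where "r + 1 = M * t"
    using assms(2) ..
  have "x * x ^ r = (x ^ M) ^ t"
    by (simp flip: power_mult \<open>r + 1 = M * t\<close>)
  then have "inverse x = x ^ r"
    using assms(1) by (intro inverse_unique) simp
  then show ?thesis
    unfolding conjg_def by simp
qed

lemma sum_powers_root_of_unity: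
  fixes z :: "'a::field"
  assumes "z ^ M = 1"
  shows "(\<Sum>k<M. z ^ k) = (if z = 1 then of_nat M else 0)"
  using assms by (simp add: sum_gp_strict)

definition vandermonde :: "(nat \<Rightarrow> 'a) \<Rightarrow> nat \<Rightarrow> nat \<Rightarrow> 'a::monoid_mult" where
  "vandermonde \<alpha> = (\<lambda>k j. \<alpha> j ^ k)"

lemma mat_mult_vandermonde_dagger:
  fixes w :: "'a::field"
  assumes "primitive_root_of_unity M w" and "M dvd r + 1" and "i < M" and "j < M"
  defines "A \<equiv> vandermonde (\<lambda>j. w ^ j)"
  shows "mat_mult M A (dagger r A) i j = (if i = j then of_nat M else 0)"
proof -
  have "M > 0"
    using assms(2) by (cases M) auto
  have root: "w ^ M = 1"
    using assms(1) unfolding primitive_root_of_unity_def by simp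
  then have "w \<noteq> 0"
    using \<open>M > 0\<close> by (auto simp: power_0_left)
  have power_swap: "(w ^ k) ^ n = (w ^ n) ^ k" for k n
    by (simp flip: power_mult add: mult.commute)
  define z where "z = w ^ i / w ^ j"
  have "A i k * dagger r A k j = z ^ k" for k
  proof -
    have "((w ^ k) ^ j) ^ M = ((w ^ M) ^ k) ^ j"
      by (simp flip: power_mult add: ac_simps)
    then have "((w ^ k) ^ j) ^ M = 1"
      by (simp add: root)
    then have "dagger r A k j = inverse ((w ^ j) ^ k)"
      unfolding A_def dagger_def vandermonde_def
      by (simp add: conjg_root_of_unity[OF _ assms(2)] power_swap[of k])
    then show ?thesis
      unfolding A_def vandermonde_def z_def
      by (simp add: power_swap[of k] divide_inverse power_mult_distrib power_inverse)
  qed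
  then have "mat_mult M A (dagger r A) i j = (\<Sum>k<M. z ^ k)"
    unfolding mat_mult_def by simp
  also have "\<dots> = (if i = j then of_nat M else 0)"
  proof -
    have "z ^ M = 1"
      using root unfolding z_def by (simp add: power_divide power_swap[of _ M])
    moreover have "z = 1 \<longleftrightarrow> i = j"
      using primitive_root_of_unity_power_eq_iff[OF assms(1) \<open>M > 0\<close>, of i j] assms(3,4) \<open>w \<noteq> 0\<close>
      unfolding z_def by simp
    ultimately show ?thesis
      by (simp add: sum_powers_root_of_unity)
  qed
  finally show ?thesis .
qed

lemma poly_eq_sum_lessThan:
  fixes x :: "'a::comm_semiring_1"
  assumes "degree p < n"
  shows "poly p x = (\<Sum>k<n. coeff p k * x ^ k)"
proof -
  have "poly p x = (\<Sum>k\<le>degree p. coeff p k * x ^ k)"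
    by (rule poly_altdef)
  also have "\<dots> = (\<Sum>k<n. coeff p k * x ^ k)"
    using assms by (intro sum.mono_neutral_left) (auto simp: coeff_eq_0)
  finally show ?thesis .
qed

text \<open>The disjunct \<open>p = 0\<close> only matters for \<open>i = 0\<close>, as \<open>degree 0 = 0\<close>.\<close>

lemma row_code_vandermonde_iff:
  fixes \<alpha> :: "nat \<Rightarrow> 'a::field"
  shows "v \<in> row_code (vandermonde \<alpha>) i l \<longleftrightarrow>
    (\<exists>p. (p = 0 \<or> degree p < i) \<and> v = (\<lambda>j. if j < l then poly p (\<alpha> j) else 0))"
proof
  assume "v \<in> row_code (vandermonde \<alpha>) i l"
  then obtain c where c: "v = (\<lambda>j. if j < l then (\<Sum>k<i. c k * \<alpha> j ^ k) else 0)"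
    unfolding row_code_def vandermonde_def by blast
  define p where "p = (\<Sum>k<i. monom (c k) k)"
  have deg: "p = 0 \<or> degree p < i"
  proof (cases i)
    case (Suc n)
    have "degree p \<le> n"
      unfolding p_def Suc by (rule degree_sum_le) (auto intro: order.trans[OF degree_monom_le])
    then show ?thesis
      using Suc by simp
  qed (simp add: p_def)
  have eval: "poly p x = (\<Sum>k<i. c k * x ^ k)" for x
    unfolding p_def by (simp add: poly_sum poly_monom)
  show "\<exists>p. (p = 0 \<or> degree p < i) \<and> v = (\<lambda>j. if j < l then poly p (\<alpha> j) else 0)"
    unfolding c using deg by (intro exI[of _ p]) (simp add: eval fun_eq_iff)
next
  assume "\<exists>p. (p = 0 \<or> degree p < i) \<and> v = (\<lambda>j. if j < l then poly p (\<alpha> j) else 0)"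
  then obtain p where p: "p = 0 \<or> degree p < i" and v: "v = (\<lambda>j. if j < l then poly p (\<alpha> j) else 0)"
    by blast
  have "poly p x = (\<Sum>k<i. coeff p k * x ^ k)" for x
    using p by (auto intro: poly_eq_sum_lessThan)
  then show "v \<in> row_code (vandermonde \<alpha>) i l"
    unfolding row_code_def vandermonde_def v by (intro CollectI exI[of _ "coeff p"]) (simp add: fun_eq_iff)
qed

lemma card_vanishing_points_le_degree:
  fixes p :: "'a::idom poly"
  assumes "p \<noteq> 0" and "inj_on \<alpha> A"
  shows "card {j \<in> A. poly p (\<alpha> j) = 0} \<le> degree p"
proof -
  have "card {j \<in> A. poly p (\<alpha> j) = 0} = card (\<alpha> ` {j \<in> A. poly p (\<alpha> j) = 0})"
    using assms(2) by (intro card_image[symmetric]) (auto intro: inj_on_subset)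
  also have "\<dots> \<le> card {x. poly p x = 0}"
    using poly_roots_finite[OF assms(1)] by (intro card_mono) auto
  also have "\<dots> \<le> degree p"
    using assms(1) by (rule card_poly_roots_bound)
  finally show ?thesis .
qed

lemma hweight_restrict:
  "hweight l (\<lambda>j. if j < l then f j else 0) = l - card {j \<in> {..<l}. f j = 0}"
proof -
  have "hweight l (\<lambda>j. if j < l then f j else 0) = card ({..<l} - {j \<in> {..<l}. f j = 0})"
    unfolding hweight_def by (rule arg_cong[where f = card]) auto
  also have "\<dots> = l - card {j \<in> {..<l}. f j = 0}"
    by (subst card_Diff_subset) auto
  finally show ?thesis .
qed

lemma vandermonde_code_weight_ge:
  fixes \<alpha> :: "nat \<Rightarrow> 'a::field"
  assumes "inj_on \<alpha> {..<l}" and "v \<in> row_code (vandermonde \<alpha>) i l" and "v \<noteq> (\<lambda>_. 0)"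
  shows "l - (i - 1) \<le> hweight l v"
proof -
  obtain p where p: "p = 0 \<or> degree p < i" and v: "v = (\<lambda>j. if j < l then poly p (\<alpha> j) else 0)"
    using assms(2) unfolding row_code_vandermonde_iff by blast
  have "p \<noteq> 0"
    using assms(3) v by auto
  then have "card {j \<in> {..<l}. poly p (\<alpha> j) = 0} \<le> degree p"
    using assms(1) by (rule card_vanishing_points_le_degree)
  also have "\<dots> \<le> i - 1"
    using p \<open>p \<noteq> 0\<close> by simp
  finally have "card {j \<in> {..<l}. poly p (\<alpha> j) = 0} \<le> i - 1" .
  then show ?thesis
    unfolding v hweight_restrict by simp
qed

lemma vandermonde_code_weight_attained:
  fixes \<alpha> :: "nat \<Rightarrow> 'a::field"
  assumes "inj_on \<alpha> {..<l}" and "1 \<le> i" and "i \<le> l"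
  shows "\<exists>v \<in> row_code (vandermonde \<alpha>) i l. v \<noteq> (\<lambda>_. 0) \<and> hweight l v = l - i + 1"
proof -
  define p where "p = (\<Prod>k\<in>{1..<i}. [:- \<alpha> k, 1:])"
  define v where "v = (\<lambda>j. if j < l then poly p (\<alpha> j) else 0)"
  have "degree p \<le> i - 1"
    unfolding p_def using degree_prod_sum_le[of "{1..<i}" "\<lambda>k. [:- \<alpha> k, 1:]"] by simp
  then have "v \<in> row_code (vandermonde \<alpha>) i l"
    unfolding row_code_vandermonde_iff v_def using assms(2) by (intro exI[of _ p]) auto
  have roots: "poly p (\<alpha> j) = 0 \<longleftrightarrow> j \<in> {1..<i}" if "j < l" for j
  proof -
    have "poly p (\<alpha> j) = 0 \<longleftrightarrow> (\<exists>k\<in>{1..<i}. \<alpha> j = \<alpha> k)"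
      unfolding p_def by (simp add: poly_prod)
    also have "\<dots> \<longleftrightarrow> j \<in> {1..<i}"
      using inj_onD[OF assms(1)] that assms(3) by fastforce
    finally show ?thesis .
  qed
  then have zeros: "{j \<in> {..<l}. poly p (\<alpha> j) = 0} = {1..<i}"
    using assms(3) by auto
  have "v 0 \<noteq> 0"
    using roots[of 0] assms(2,3) unfolding v_def by simp
  then have "v \<noteq> (\<lambda>_. 0)"
    by auto
  moreover have "hweight l v = l - i + 1"
    unfolding v_def hweight_restrict zeros using assms(2,3) by simp
  ultimately show ?thesis
    using \<open>v \<in> row_code (vandermonde \<alpha>) i l\<close> by blast
qed

theorem delta_vandermonde:
  fixes \<alpha> :: "nat \<Rightarrow> 'a::field"
  assumes "inj_on \<alpha> {..<l}" and "1 \<le> i" and "i \<le> l"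
  shows "delta (vandermonde \<alpha>) l i = l - i + 1"
  unfolding delta_def
proof (rule cInf_eq_minimum)
  obtain v where "v \<in> row_code (vandermonde \<alpha>) i l" "v \<noteq> (\<lambda>_. 0)" "hweight l v = l - i + 1"
    using vandermonde_code_weight_attained[OF assms] by blast
  then show "l - i + 1 \<in> hweight l ` (row_code (vandermonde \<alpha>) i l - {\<lambda>_. 0})"
    by (metis DiffI image_eqI singletonD)
  show "l - i + 1 \<le> x" if x: "x \<in> hweight l ` (row_code (vandermonde \<alpha>) i l - {\<lambda>_. 0})" for x
  proof -
    obtain v where "v \<in> row_code (vandermonde \<alpha>) i l" "v \<noteq> (\<lambda>_. 0)" "x = hweight l v"
      using x by blast
    then show ?thesis
      using vandermonde_code_weight_ge[OF assms(1)] assms(2,3) by force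
  qed
qed

lemma of_nat_neq_0_if_dvd_Suc:
  assumes "(of_nat r :: 'a::semiring_1) = 0" and "M dvd r + 1"
  shows "(of_nat M :: 'a) \<noteq> 0"
proof
  assume M: "(of_nat M :: 'a) = 0"
  obtain t where "r + 1 = M * t"
    using assms(2) ..
  then have "(of_nat (r + 1) :: 'a) = of_nat M * of_nat t"
    by simp
  then show False
    using assms(1) M by simp
qed

lemma of_nat_eq_0_if_card_eq_prime_power:
  assumes "prime_power r" and "card (UNIV :: 'a::{finite,field} set) = r ^ n" and "n > 0"
  shows "(of_nat r :: 'a) = 0"
proof -
  obtain p k where "Factorial_Ring.prime p" "k > 0" "r = p ^ k"
    using assms(1) unfolding prime_power_def by blast
  have "Factorial_Ring.prime CHAR('a)"
    by (rule prime_CHAR_semidom) (simp add: finite_imp_CHAR_pos)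
  moreover have "CHAR('a) dvd p ^ (k * n)"
    using CHAR_dvd_CARD[where 'a = 'a] assms(2) \<open>r = p ^ k\<close> by (simp add: power_mult)
  ultimately have "CHAR('a) dvd p"
    using prime_dvd_power by blast
  then have "CHAR('a) dvd r"
    using \<open>k > 0\<close> \<open>r = p ^ k\<close> by (simp add: dvd_power_iff_le dvd_trans[OF _ dvd_power[of k p]])
  then show ?thesis
    by (simp add: of_nat_eq_0_iff_char_dvd)
qed

theorem lemma4p2:
  fixes r M :: nat
  assumes "prime_power r"
    and "card (UNIV :: 'a::{finite,field} set) = r ^ 2"
    and "M > 0" and "M dvd (r + 1)"
  shows "\<exists>A :: nat \<Rightarrow> nat \<Rightarrow> 'a.
           (\<forall>i<M. \<forall>j<M. mat_mult M A (dagger r A) i j = (if i = j then of_nat M else 0))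
         \<and> (of_nat M :: 'a) \<noteq> 0
         \<and> (\<forall>i. 1 \<le> i \<and> i \<le> M \<longrightarrow> delta A M i = M - i + 1)"
proof -
  have "(of_nat r :: 'a) = 0"
    using of_nat_eq_0_if_card_eq_prime_power[OF assms(1,2)] by simp
  then have M_nonzero: "(of_nat M :: 'a) \<noteq> 0"
    using assms(4) by (rule of_nat_neq_0_if_dvd_Suc)
  have "card (UNIV :: 'a set) - 1 = (r + 1) * (r - 1)"
    using assms(2) by (simp add: power2_eq_square algebra_simps)
  then have "M dvd card (UNIV :: 'a set) - 1"
    using assms(4) by (simp only: dvd_mult2)
  then obtain w :: 'a where w: "primitive_root_of_unity M w"
    using finite_field_has_primitive_root_of_unity by blast
  define A where "A = vandermonde (\<lambda>j. w ^ j)"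
  have "inj_on (\<lambda>j. w ^ j) {..<M}"
    using w assms(3) by (rule inj_on_power_primitive_root_of_unity)
  then have "delta A M i = M - i + 1" if "1 \<le> i" "i \<le> M" for i
    unfolding A_def using that by (rule delta_vandermonde)
  moreover have "mat_mult M A (dagger r A) i j = (if i = j then of_nat M else 0)" if "i < M" "j < M" for i j
    unfolding A_def using w assms(4) that by (rule mat_mult_vandermonde_dagger)
  ultimately show ?thesis
    using M_nonzero by blast
qed

end
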